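(* Let $M,N\ge 0$ be integers, $a_0,\dots,a_M\in\mathbb{R}$, $f_M(x)=\sum_{m=0}^M a_mT_m(x)$, and set $a_{M+1}=a_{M+2}=0$. For $0\le n\le N$ and $y\in[-1,1]$ let $\tilde R_n(y)=\int_{-1}^{y}f_M(y-1-t)T_n(t)\,\mathrm{d}t$, and let $R=(R_{k,n})$, $0\le k\le M+N+1$, $0\le n\le N$, be the matrix of Chebyshev coefficients defined by $\tilde R_n(y)=\sum_{k=0}^{M+N+1}R_{k,n}T_k(y)$. Then the zeroth column of $R$ is $$R_{k,0}=\begin{cases}0, & k>M+1,\\[1mm] \dfrac{a_{k-1}-a_{k+1}}{2k}, & 2\le k\le M+1,\\[2mm] a_0-\dfrac{a_2}{2}, & k=1,\\[2mm] \displaystyle\sum_{j=1}^{M+1}(-1)^{j+1}R_{j,0}, & k=0.\end{cases}$$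
   Context: $T_m(x)=\cos(m\arccos x)$ is the $m$-th Chebyshev polynomial. Each $\tilde R_n$ is a polynomial in $y$ of degree at most $M+n+1\le M+N+1$, so the coefficients $R_{k,n}$ are well defined, with $R_{k,n}=0$ for $k>M+n+1$. The matrix $R$ is called the (Chebyshev) convolution matrix of $f_M$. *)

theory Defs
  imports "HOL-Analysis.Analysis"
begin

text \<open>Chebyshev polynomial of the first kind, as in the paper: T_m(x) = cos(m arccos x)
  (used only on [-1,1]).\<close>
definition cheb :: "nat \<Rightarrow> real \<Rightarrow> real" where
  "cheb m x = cos (real m * arccos x)"

definition fM :: "nat \<Rightarrow> (nat \<Rightarrow> real) \<Rightarrow> real \<Rightarrow> real" where
  "fM M a x = (\<Sum>m\<le>M. a m * cheb m x)"

definition Rtilde :: "nat \<Rightarrow> (nat \<Rightarrow> real) \<Rightarrow> nat \<Rightarrow> real \<Rightarrow> real" where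
  "Rtilde M a n y = integral {-1..y} (\<lambda>t. fM M a (y - 1 - t) * cheb n t)"

end

theory Submission
  imports Defs "HOL-Computational_Algebra.Polynomial"
begin

text \<open>On [-1,1] the Chebyshev functions are the polynomials T_k of degree exactly k, so a
  Chebyshev expansion there determines its coefficients. Differentiating T_k(cos t) = cos(k t)
  gives T_k'(cos t) sin t = k sin(k t); together with
  2 sin t cos(m t) = sin((m+1) t) - sin((m-1) t) this shows that Q = sum_{k=1}^{M+1} c_k T_k,
  with c_k the claimed entries R_{k,0} for k >= 1, satisfies Q' = f_M. The substitution
  s = y - 1 - t turns the defining integral of R_0 into the integral of f_M over [-1,y], that is
  Q(y) - Q(-1), and T_k(-1) = (-1)^k yields the constant coefficient.\<close>

fun chebyshev_poly :: "nat \<Rightarrow> real poly" where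
  "chebyshev_poly 0 = 1"
| "chebyshev_poly (Suc 0) = [:0, 1:]"
| "chebyshev_poly (Suc (Suc n)) = pCons 0 (smult 2 (chebyshev_poly (Suc n))) - chebyshev_poly n"

lemma cos_Suc_Suc_mult:
  "cos (real (Suc (Suc n)) * t) = 2 * cos t * cos (real (Suc n) * t) - cos (real n * t)"
proof -
  have "cos (real (Suc (Suc n)) * t) = cos (real (Suc n) * t + t)"
    and "cos (real n * t) = cos (real (Suc n) * t - t)"
    by (simp_all add: algebra_simps)
  then show ?thesis by (simp add: cos_add cos_diff)
qed

lemma poly_chebyshev_poly_cos: "poly (chebyshev_poly n) (cos t) = cos (real n * t)"
proof (induction n rule: chebyshev_poly.induct)
  case (3 n)
  then show ?case
    by (simp only: chebyshev_poly.simps poly_diff poly_pCons poly_smult cos_Suc_Suc_mult)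
qed simp_all

lemma cheb_eq_poly_chebyshev_poly: "x \<in> {-1..1} \<Longrightarrow> cheb n x = poly (chebyshev_poly n) x"
  using poly_chebyshev_poly_cos[of n "arccos x"] by (simp add: cheb_def)

lemma poly_chebyshev_poly_minus_one: "poly (chebyshev_poly n) (-1) = (-1) ^ n"
  using poly_chebyshev_poly_cos[of n pi] by (simp add: cos_npi)

lemma degree_chebyshev_poly: "degree (chebyshev_poly n) = n"
proof (induction n rule: chebyshev_poly.induct)
  case (3 n)
  have deg_n: "degree (chebyshev_poly n) = n"
    and deg_Suc_n: "degree (chebyshev_poly (Suc n)) = Suc n"
    using "3.IH" by simp_all
  then have "chebyshev_poly (Suc n) \<noteq> 0"
    by (metis degree_0 nat.distinct(1))
  then have "degree (pCons 0 (smult 2 (chebyshev_poly (Suc n)))) = Suc (Suc n)"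
    using deg_Suc_n by simp
  then show ?case
    using degree_add_eq_left[of "- chebyshev_poly n"] deg_n by simp
qed simp_all

lemma chebyshev_poly_nonzero: "chebyshev_poly n \<noteq> 0"
proof (cases n)
  case (Suc m)
  then show ?thesis
    using degree_chebyshev_poly[of n] by (metis degree_0 nat.distinct(1))
qed simp

lemma poly_pderiv_chebyshev_poly_cos:
  "poly (pderiv (chebyshev_poly k)) (cos t) * sin t = real k * sin (real k * t)"
proof -
  have "((\<lambda>t. poly (chebyshev_poly k) (cos t)) has_real_derivative
          poly (pderiv (chebyshev_poly k)) (cos t) * - sin t) (at t)"
    by (rule DERIV_chain2[OF poly_DERIV DERIV_cos])
  moreover have "((\<lambda>t. poly (chebyshev_poly k) (cos t)) has_real_derivative
          - sin (real k * t) * real k) (at t)"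
    unfolding poly_chebyshev_poly_cos by (auto intro!: derivative_eq_intros)
  ultimately show ?thesis
    by (auto dest: DERIV_unique)
qed

lemma poly_eqI_infinite:
  fixes p q :: "'a::idom poly"
  assumes "infinite A" and "\<And>x. x \<in> A \<Longrightarrow> poly p x = poly q x"
  shows "p = q"
proof (rule ccontr)
  assume "p \<noteq> q"
  then have "finite {x. poly (p - q) x = 0}"
    by (intro poly_roots_finite) simp
  moreover have "A \<subseteq> {x. poly (p - q) x = 0}"
    using assms(2) by auto
  ultimately show False
    using assms(1) finite_subset by blast
qed

lemma coeff_eq_0_if_sum_smult_eq_0:
  fixes p :: "nat \<Rightarrow> 'a::idom poly"
  assumes "\<And>k. k \<le> K \<Longrightarrow> p k \<noteq> 0 \<and> degree (p k) = k"
    and "(\<Sum>k\<le>K. smult (c k) (p k)) = 0" and "k \<le> K"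
  shows "c k = 0"
  using assms
proof (induction K arbitrary: k)
  case 0
  then show ?case by simp
next
  case (Suc K)
  have "coeff (\<Sum>k\<le>Suc K. smult (c k) (p k)) (Suc K) = c (Suc K) * lead_coeff (p (Suc K))"
    using Suc.prems(1) by (simp add: coeff_sum coeff_eq_0)
  moreover have "lead_coeff (p (Suc K)) \<noteq> 0"
    using Suc.prems(1)[of "Suc K"] by (metis le_refl leading_coeff_0_iff)
  ultimately have top: "c (Suc K) = 0"
    using Suc.prems(2) by (metis coeff_0 mult_eq_0_iff)
  then have "(\<Sum>k\<le>K. smult (c k) (p k)) = 0"
    using Suc.prems(2) by simp
  then show ?case
    using Suc.IH[of k] Suc.prems(1,3) top by (cases "k = Suc K") auto
qed

lemma cheb_coeffs_unique:
  assumes "\<And>y. y \<in> {-1<..<1} \<Longrightarrow> (\<Sum>k\<le>K. c k * cheb k y) = (\<Sum>k\<le>K. d k * cheb k y)"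
    and "k \<le> K"
  shows "c k = d k"
proof -
  have "(\<Sum>k\<le>K. smult (c k - d k) (chebyshev_poly k)) = 0"
  proof (rule poly_eqI_infinite)
    show "infinite {-1<..<1::real}"
      by (simp add: infinite_Ioo)
  next
    fix y :: real assume "y \<in> {-1<..<1}"
    then show "poly (\<Sum>k\<le>K. smult (c k - d k) (chebyshev_poly k)) y = poly 0 y"
      using assms(1)[of y]
      by (simp add: poly_sum cheb_eq_poly_chebyshev_poly algebra_simps sum_subtractf)
  qed
  then show ?thesis
    using coeff_eq_0_if_sum_smult_eq_0[where p = chebyshev_poly] assms(2)
    by (fastforce simp: chebyshev_poly_nonzero degree_chebyshev_poly)
qed

definition chebyshev_antideriv_coeff :: "(nat \<Rightarrow> real) \<Rightarrow> nat \<Rightarrow> real" where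
  "chebyshev_antideriv_coeff A k =
     (if k = 1 then A 0 - A 2 / 2 else (A (k - 1) - A (k + 1)) / (2 * real k))"

definition chebyshev_antideriv :: "nat \<Rightarrow> (nat \<Rightarrow> real) \<Rightarrow> real poly" where
  "chebyshev_antideriv n A =
     (\<Sum>k=1..n+1. smult (chebyshev_antideriv_coeff A k) (chebyshev_poly k))"

lemma sin_mult_cos_Suc:
  "sin t * cos (real (Suc n) * t) = (sin (real (n + 2) * t) - sin (real n * t)) / 2"
proof -
  have "sin (real (n + 2) * t) = sin (real (Suc n) * t + t)"
    and "sin (real n * t) = sin (real (Suc n) * t - t)"
    by (simp_all add: algebra_simps)
  then show ?thesis by (simp add: sin_add sin_diff)
qed

lemma sin_mult_sum_cos:
  "sin t * (\<Sum>m\<le>n. A m * cos (real m * t)) =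
     (\<Sum>k=1..n+1. real k * chebyshev_antideriv_coeff A k * sin (real k * t))
     + (A (n + 1) * sin (real n * t) + A (n + 2) * sin (real (n + 1) * t)) / 2"
proof (induction n)
  case 0
  then show ?case
    by (simp add: chebyshev_antideriv_coeff_def algebra_simps numeral_2_eq_2)
next
  case (Suc n)
  have lhs: "sin t * (\<Sum>m\<le>Suc n. A m * cos (real m * t)) =
      sin t * (\<Sum>m\<le>n. A m * cos (real m * t)) + A (Suc n) * (sin t * cos (real (Suc n) * t))"
    by (simp add: distrib_left)
  have rhs: "(\<Sum>k=1..Suc n+1. real k * chebyshev_antideriv_coeff A k * sin (real k * t)) =
      (\<Sum>k=1..n+1. real k * chebyshev_antideriv_coeff A k * sin (real k * t))
      + (A (Suc n) - A (Suc n + 2)) / 2 * sin (real (n + 2) * t)"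
    by (simp add: chebyshev_antideriv_coeff_def numeral_3_eq_3 field_simps)
  show ?case
    unfolding lhs rhs Suc.IH sin_mult_cos_Suc by (simp add: field_simps)
qed

lemma pderiv_chebyshev_antideriv:
  assumes "A (n + 1) = 0" and "A (n + 2) = 0"
  shows "pderiv (chebyshev_antideriv n A) = (\<Sum>m\<le>n. smult (A m) (chebyshev_poly m))"
proof (rule poly_eqI_infinite)
  show "infinite {-1<..<1::real}"
    by (simp add: infinite_Ioo)
next
  fix x :: real assume "x \<in> {-1<..<1}"
  define t where "t = arccos x"
  have "0 < t" "t < pi"
    using arccos_lt_bounded \<open>x \<in> {-1<..<1}\<close> by (auto simp: t_def)
  then have "sin t > 0"
    by (simp add: sin_gt_zero)
  have "x = cos t"
    using \<open>x \<in> {-1<..<1}\<close> by (simp add: t_def cos_arccos)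
  have "poly (pderiv (chebyshev_antideriv n A)) (cos t) * sin t =
      (\<Sum>k=1..n+1. chebyshev_antideriv_coeff A k * (poly (pderiv (chebyshev_poly k)) (cos t) * sin t))"
    using higher_pderiv_sum[of 1 "\<lambda>k. smult (chebyshev_antideriv_coeff A k) (chebyshev_poly k)"]
    by (simp add: chebyshev_antideriv_def pderiv_add pderiv_smult poly_sum
        sum_distrib_right distrib_right mult.assoc)
  also have "\<dots> = (\<Sum>k=1..n+1. chebyshev_antideriv_coeff A k * (real k * sin (real k * t)))"
    by (simp only: poly_pderiv_chebyshev_poly_cos)
  also have "\<dots> = sin t * (\<Sum>m\<le>n. A m * cos (real m * t))"
    using sin_mult_sum_cos[where t = t and n = n and A = A] assms by (simp add: mult_ac)
  also have "\<dots> = poly (\<Sum>m\<le>n. smult (A m) (chebyshev_poly m)) (cos t) * sin t"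
    by (simp add: poly_sum poly_chebyshev_poly_cos sum_distrib_left mult.commute)
  finally show "poly (pderiv (chebyshev_antideriv n A)) x =
      poly (\<Sum>m\<le>n. smult (A m) (chebyshev_poly m)) x"
    using \<open>sin t > 0\<close> \<open>x = cos t\<close> by simp
qed

lemma integral_poly_pderiv_reflect:
  fixes Q :: "real poly"
  assumes "a \<le> b"
  shows "integral {a..b} (\<lambda>t. poly (pderiv Q) (a + b - t)) = poly Q b - poly Q a"
proof -
  have "((\<lambda>t. - poly Q (a + b - t)) has_real_derivative poly (pderiv Q) (a + b - t))
      (at t within {a..b})" for t
    by (auto intro!: derivative_eq_intros poly_DERIV[THEN DERIV_chain2])
  then have "((\<lambda>t. poly (pderiv Q) (a + b - t)) has_integral
      (- poly Q (a + b - b)) - (- poly Q (a + b - a))) {a..b}"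
    using assms by (intro fundamental_theorem_of_calculus)
      (auto simp: has_real_derivative_iff_has_vector_derivative)
  then show ?thesis
    by (simp add: integral_unique)
qed

lemma fM_eq_poly:
  "x \<in> {-1..1} \<Longrightarrow> fM M a x = poly (\<Sum>m\<le>M. smult (a m) (chebyshev_poly m)) x"
  by (simp add: fM_def poly_sum cheb_eq_poly_chebyshev_poly)

lemma Rtilde_0_eq_chebyshev_antideriv:
  assumes "a (M + 1) = 0" and "a (M + 2) = 0" and "y \<in> {-1..1}"
  shows "Rtilde M a 0 y = poly (chebyshev_antideriv M a) y - poly (chebyshev_antideriv M a) (-1)"
proof -
  have "Rtilde M a 0 y = integral {-1..y} (\<lambda>t. poly (pderiv (chebyshev_antideriv M a)) (-1 + y - t))"
    unfolding Rtilde_def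
  proof (rule integral_cong)
    fix t assume "t \<in> {-1..y}"
    then have "y - 1 - t \<in> {-1..1}"
      using assms(3) by auto
    then show "fM M a (y - 1 - t) * cheb 0 t = poly (pderiv (chebyshev_antideriv M a)) (-1 + y - t)"
      by (simp add: fM_eq_poly pderiv_chebyshev_antideriv[OF assms(1,2)] cheb_def)
  qed
  then show ?thesis
    using integral_poly_pderiv_reflect[of "-1" y "chebyshev_antideriv M a"] assms(3) by simp
qed

lemma poly_chebyshev_antideriv_minus_one:
  "poly (chebyshev_antideriv n A) (-1) = (\<Sum>k=1..n+1. chebyshev_antideriv_coeff A k * (-1) ^ k)"
  by (simp add: chebyshev_antideriv_def poly_sum poly_chebyshev_poly_minus_one)

definition Rtilde_0_coeff :: "nat \<Rightarrow> (nat \<Rightarrow> real) \<Rightarrow> nat \<Rightarrow> real" where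
  "Rtilde_0_coeff M a k =
     (if k = 0 then (\<Sum>j=1..M+1. (-1) ^ (j + 1) * chebyshev_antideriv_coeff a j)
      else if k \<le> M + 1 then chebyshev_antideriv_coeff a k else 0)"

lemma Rtilde_0_eq_cheb_sum:
  assumes "a (M + 1) = 0" and "a (M + 2) = 0" and "y \<in> {-1..1}" and "M + 1 \<le> K"
  shows "Rtilde M a 0 y = (\<Sum>k\<le>K. Rtilde_0_coeff M a k * cheb k y)"
proof -
  let ?S = "Rtilde_0_coeff M a"
  have "Rtilde M a 0 y = poly (chebyshev_antideriv M a) y - poly (chebyshev_antideriv M a) (-1)"
    using Rtilde_0_eq_chebyshev_antideriv[OF assms(1-3)] .
  also have "poly (chebyshev_antideriv M a) y = (\<Sum>k=1..M+1. ?S k * cheb k y)"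
    unfolding chebyshev_antideriv_def poly_sum using assms(3)
    by (intro sum.cong) (auto simp: Rtilde_0_coeff_def cheb_eq_poly_chebyshev_poly)
  also have "poly (chebyshev_antideriv M a) (-1) = - ?S 0"
    by (simp add: poly_chebyshev_antideriv_minus_one Rtilde_0_coeff_def mult.commute
        flip: sum_negf)
  also have "(\<Sum>k=1..M+1. ?S k * cheb k y) - - ?S 0 = (\<Sum>k\<le>K. ?S k * cheb k y)"
  proof -
    have "(\<Sum>k=1..K. ?S k * cheb k y) = (\<Sum>k=1..M+1. ?S k * cheb k y)"
      using assms(4) by (intro sum.mono_neutral_right) (auto simp: Rtilde_0_coeff_def)
    moreover have "?S 0 * cheb 0 y = ?S 0"
      by (simp add: cheb_def)
    ultimately show ?thesis
      unfolding atMost_atLeast0 sum.atLeast_Suc_atMost[OF le0] One_nat_def[symmetric]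
      by linarith
  qed
  finally show ?thesis .
qed

theorem theorem3p2:
  fixes M N :: nat and a :: "nat \<Rightarrow> real" and R :: "nat \<Rightarrow> nat \<Rightarrow> real"
  assumes a_M1: "a (M + 1) = 0" and a_M2: "a (M + 2) = 0"
    and R_def: "\<And>n y. n \<le> N \<Longrightarrow> y \<in> {-1..1} \<Longrightarrow>
                   Rtilde M a n y = (\<Sum>k\<le>M + N + 1. R k n * cheb k y)"
  shows "(\<forall>k. M + 1 < k \<and> k \<le> M + N + 1 \<longrightarrow> R k 0 = 0)
       \<and> (\<forall>k. 2 \<le> k \<and> k \<le> M + 1 \<longrightarrow> R k 0 = (a (k - 1) - a (k + 1)) / (2 * real k))
       \<and> R 1 0 = a 0 - a 2 / 2
       \<and> R 0 0 = (\<Sum>j=1..M + 1. (-1) ^ (j + 1) * R j 0)"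
proof -
  have "R k 0 = Rtilde_0_coeff M a k" if "k \<le> M + N + 1" for k
  proof (rule cheb_coeffs_unique[OF _ that])
    fix y :: real assume "y \<in> {-1<..<1}"
    then show "(\<Sum>k\<le>M + N + 1. R k 0 * cheb k y) =
        (\<Sum>k\<le>M + N + 1. Rtilde_0_coeff M a k * cheb k y)"
      using R_def[of 0 y] Rtilde_0_eq_cheb_sum[OF a_M1 a_M2, of y "M + N + 1"] by simp
  qed
  then show ?thesis
    using a_M1 a_M2
    by (auto simp: Rtilde_0_coeff_def chebyshev_antideriv_coeff_def intro!: sum.cong)
qed

end
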